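(* Let $h$ be a smooth function on a neighborhood of $(0,0)$ whose Taylor expansion at $(0,0)$ is $h(x,y)=a^2x^2+b^2y^2+\sum_{m+n\ge3}h_{m,n}x^my^n$, where $a,b>0$ are linearly independent over $\mathbb{Q}$. Then there is a unique formal power series $z(x,y)=\frac12(ax^2-by^2)+\sum_{m+n\ge3}z_{m,n}x^my^n$ satisfying $z_x^2+z_y^2=h$ as formal power series. *)

theory Defs
  imports Complex_Main
begin

text \<open>Formal power series in two variables x, y over the reals, represented by
  their coefficient arrays: f m n is the coefficient of x^m y^n.\<close>
type_synonym fps2 = "nat \<Rightarrow> nat \<Rightarrow> real"

definition fps2_dx :: "fps2 \<Rightarrow> fps2" where
  "fps2_dx f m n = real (m + 1) * f (m + 1) n"

definition fps2_dy :: "fps2 \<Rightarrow> fps2" where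
  "fps2_dy f m n = real (n + 1) * f m (n + 1)"

definition fps2_mult :: "fps2 \<Rightarrow> fps2 \<Rightarrow> fps2" where
  "fps2_mult f g m n = (\<Sum>i\<le>m. \<Sum>j\<le>n. f i j * g (m - i) (n - j))"

definition fps2_add :: "fps2 \<Rightarrow> fps2 \<Rightarrow> fps2" where
  "fps2_add f g m n = f m n + g m n"

definition rat_lin_indep2 :: "real \<Rightarrow> real \<Rightarrow> bool" where
  "rat_lin_indep2 a b \<longleftrightarrow>
     (\<forall>p q :: rat. of_rat p * a + of_rat q * b = 0 \<longrightarrow> p = 0 \<and> q = 0)"

end

theory Submission
  imports Defs "HOL-Library.Function_Algebras"
begin

text \<open>Write \<open>z = S + W\<close> with \<open>S = saddle a b = (a x\<^sup>2 - b y\<^sup>2) / 2\<close>. Since \<open>S\<^sub>x = a x\<close> and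
  \<open>S\<^sub>y = - b y\<close>, the operator \<open>g \<mapsto> S\<^sub>x g\<^sub>x + S\<^sub>y g\<^sub>y\<close> multiplies the coefficient of
  \<open>x\<^sup>m y\<^sup>n\<close> by \<open>a m - b n\<close>, which vanishes only for \<open>m = n = 0\<close> because \<open>a\<close> and \<open>b\<close> are
  linearly independent over \<open>\<rat>\<close>. Hence the coefficient of \<open>x\<^sup>m y\<^sup>n\<close> in
  \<open>z\<^sub>x\<^sup>2 + z\<^sub>y\<^sup>2 = h\<close> reads \<open>2 (a m - b n) z\<^sub>m\<^sub>n = h\<^sub>m\<^sub>n - (S\<^sub>x\<^sup>2 + S\<^sub>y\<^sup>2)\<^sub>m\<^sub>n - (W\<^sub>x\<^sup>2 + W\<^sub>y\<^sup>2)\<^sub>m\<^sub>n\<close>,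
  and as \<open>W\<close> has order at least 3 the last term only involves coefficients of \<open>z\<close> of total
  degree below \<open>m + n\<close>. So the coefficients of \<open>z\<close> are uniquely determined, degree by
  degree.\<close>

definition fps2_grad_dot :: "fps2 \<Rightarrow> fps2 \<Rightarrow> fps2" where
  "fps2_grad_dot f g = fps2_add (fps2_mult (fps2_dx f) (fps2_dx g)) (fps2_mult (fps2_dy f) (fps2_dy g))"

definition fps2_vanishes_below :: "nat \<Rightarrow> fps2 \<Rightarrow> bool" where
  "fps2_vanishes_below k f \<longleftrightarrow> (\<forall>i j. i + j < k \<longrightarrow> f i j = 0)"

definition fps2_monom :: "real \<Rightarrow> nat \<Rightarrow> nat \<Rightarrow> fps2" where
  "fps2_monom c p q i j = (if i = p \<and> j = q then c else 0)"

definition saddle :: "real \<Rightarrow> real \<Rightarrow> fps2" where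
  "saddle a b = fps2_monom (a / 2) 2 0 + fps2_monom (- b / 2) 0 2"

lemma fps2_add_eq_plus: "fps2_add f g = f + g"
  by (simp add: fun_eq_iff fps2_add_def)

lemma fps2_mult_commute: "fps2_mult f g = fps2_mult g f"
proof (intro ext)
  fix m n
  have rev: "(\<Sum>i\<le>k. F i) = (\<Sum>i\<le>k. F (k - i))" for k and F :: "nat \<Rightarrow> real"
    using sum.atLeastAtMost_rev[of F 0 k] by (simp add: atLeast0AtMost)
  have "fps2_mult f g m n = (\<Sum>i\<le>m. \<Sum>j\<le>n. f (m - i) (n - j) * g (m - (m - i)) (n - (n - j)))"
    unfolding fps2_mult_def by (subst rev, rule sum.cong, simp, subst rev, simp)
  also have "\<dots> = fps2_mult g f m n"
    unfolding fps2_mult_def by (intro sum.cong refl) (simp add: mult.commute)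
  finally show "fps2_mult f g m n = fps2_mult g f m n" .
qed

lemma fps2_mult_add_left: "fps2_mult (f + g) k = fps2_mult f k + fps2_mult g k"
  by (simp add: fun_eq_iff fps2_mult_def distrib_right sum.distrib)

lemma fps2_dx_add: "fps2_dx (f + g) = fps2_dx f + fps2_dx g"
  by (simp add: fun_eq_iff fps2_dx_def distrib_left)

lemma fps2_dy_add: "fps2_dy (f + g) = fps2_dy f + fps2_dy g"
  by (simp add: fun_eq_iff fps2_dy_def distrib_left)

lemma fps2_grad_dot_commute: "fps2_grad_dot f g = fps2_grad_dot g f"
  by (simp add: fps2_grad_dot_def fps2_mult_commute)

lemma fps2_grad_dot_add_left: "fps2_grad_dot (f + g) k = fps2_grad_dot f k + fps2_grad_dot g k"
  by (simp add: fps2_grad_dot_def fps2_add_eq_plus fps2_dx_add fps2_dy_add fps2_mult_add_left)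

lemma fps2_grad_dot_add_right: "fps2_grad_dot k (f + g) = fps2_grad_dot k f + fps2_grad_dot k g"
  by (simp add: fps2_grad_dot_commute[of k] fps2_grad_dot_add_left)

lemma fps2_grad_dot_self_add:
  "fps2_grad_dot (f + g) (f + g) m n =
     fps2_grad_dot f f m n + 2 * fps2_grad_dot f g m n + fps2_grad_dot g g m n"
  by (simp add: fps2_grad_dot_add_left fps2_grad_dot_add_right fps2_grad_dot_commute[of g f])

lemma fps2_mult_monom:
  "fps2_mult (fps2_monom c p q) g m n = (if p \<le> m \<and> q \<le> n then c * g (m - p) (n - q) else 0)"
proof -
  have "(\<Sum>j\<le>n. fps2_monom c p q i j * g (m - i) (n - j)) =
      (if i = p \<and> q \<le> n then c * g (m - p) (n - q) else 0)" for i
    by (cases "i = p") (simp_all add: fps2_monom_def if_distrib[of "\<lambda>x. x * _"] cong: if_cong)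
  then show ?thesis
    by (cases "q \<le> n") (simp_all add: fps2_mult_def)
qed

lemma fps2_vanishes_below_dx: "fps2_vanishes_below k f \<Longrightarrow> fps2_vanishes_below (k - 1) (fps2_dx f)"
  by (simp add: fps2_vanishes_below_def fps2_dx_def)

lemma fps2_vanishes_below_dy: "fps2_vanishes_below k f \<Longrightarrow> fps2_vanishes_below (k - 1) (fps2_dy f)"
  by (simp add: fps2_vanishes_below_def fps2_dy_def)

lemma fps2_mult_vanishes:
  assumes f: "fps2_vanishes_below k f" and g: "fps2_vanishes_below l g" and "m + n < k + l"
  shows "fps2_mult f g m n = 0"
  unfolding fps2_mult_def
proof (intro sum.neutral ballI)
  fix i j assume "i \<in> {..m}" "j \<in> {..n}"
  then have "i + j < k \<or> (m - i) + (n - j) < l"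
    using \<open>m + n < k + l\<close> by auto
  then show "f i j * g (m - i) (n - j) = 0"
    using f g by (auto simp: fps2_vanishes_below_def)
qed

lemma fps2_grad_dot_vanishes:
  assumes "fps2_vanishes_below k f" "fps2_vanishes_below l g" "m + n + 2 < k + l"
  shows "fps2_grad_dot f g m n = 0"
  using assms fps2_mult_vanishes[OF fps2_vanishes_below_dx fps2_vanishes_below_dx, of k f l g m n]
    fps2_mult_vanishes[OF fps2_vanishes_below_dy fps2_vanishes_below_dy, of k f l g m n]
  by (simp add: fps2_grad_dot_def fps2_add_def)

lemma fps2_grad_dot_self_cong:
  assumes f: "fps2_vanishes_below 3 f" and g: "fps2_vanishes_below 3 g"
    and agree: "\<forall>i j. i + j < m + n \<longrightarrow> f i j = g i j"
  shows "fps2_grad_dot f f m n = fps2_grad_dot g g m n"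
proof -
  have d3: "fps2_vanishes_below 3 (f - g)" and dmn: "fps2_vanishes_below (m + n) (f - g)"
    using f g agree by (simp_all add: fps2_vanishes_below_def)
  have "fps2_grad_dot f f m n = fps2_grad_dot (g + (f - g)) (g + (f - g)) m n"
    by simp
  also have "\<dots> = fps2_grad_dot g g m n"
    unfolding fps2_grad_dot_self_add
    using fps2_grad_dot_vanishes[OF g dmn] fps2_grad_dot_vanishes[OF d3 dmn] by simp
  finally show ?thesis .
qed

lemma fps2_dx_saddle: "fps2_dx (saddle a b) = fps2_monom a 1 0"
  by (auto simp: fun_eq_iff fps2_dx_def saddle_def fps2_monom_def)

lemma fps2_dy_saddle: "fps2_dy (saddle a b) = fps2_monom (- b) 0 1"
  by (auto simp: fun_eq_iff fps2_dy_def saddle_def fps2_monom_def)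

lemma fps2_grad_dot_saddle: "fps2_grad_dot (saddle a b) g m n = (a * real m - b * real n) * g m n"
  unfolding fps2_grad_dot_def fps2_add_def fps2_dx_saddle fps2_dy_saddle fps2_mult_monom
  by (cases m; cases n) (auto simp: fps2_dx_def fps2_dy_def algebra_simps)

lemma fps2_grad_dot_saddle_saddle:
  "fps2_grad_dot (saddle a b) (saddle a b) m n =
     (if (m, n) = (2, 0) then a ^ 2 else if (m, n) = (0, 2) then b ^ 2 else 0)"
  unfolding fps2_grad_dot_saddle by (auto simp: saddle_def fps2_monom_def power2_eq_square)

lemma rat_lin_indep2_nat_comb_eq_0:
  assumes "rat_lin_indep2 a b" "a * real m - b * real n = 0"
  shows "m = 0 \<and> n = 0"
proof -
  have "of_rat (of_nat m) * a + of_rat (- of_nat n) * b = 0"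
    using assms(2) by (simp add: of_rat_minus algebra_simps)
  then show ?thesis
    using assms(1) unfolding rat_lin_indep2_def by fastforce
qed

lemma fps2_grad_dot_self_saddle_cong:
  assumes "fps2_vanishes_below 3 (z - saddle a b)" "fps2_vanishes_below 3 (w - saddle a b)"
    and "\<forall>i j. i + j < m + n \<longrightarrow> z i j = w i j"
  shows "fps2_grad_dot z z m n - fps2_grad_dot w w m n = 2 * (a * real m - b * real n) * (z m n - w m n)"
proof -
  let ?S = "saddle a b"
  have expand: "fps2_grad_dot u u m n = fps2_grad_dot ?S ?S m n
      + 2 * (a * real m - b * real n) * (u m n - ?S m n) + fps2_grad_dot (u - ?S) (u - ?S) m n" for u
    using fps2_grad_dot_self_add[of ?S "u - ?S" m n] by (simp add: fps2_grad_dot_saddle)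
  have "fps2_grad_dot (z - ?S) (z - ?S) m n = fps2_grad_dot (w - ?S) (w - ?S) m n"
    using assms by (intro fps2_grad_dot_self_cong) auto
  then show ?thesis
    using expand[of z] expand[of w] by (simp add: algebra_simps)
qed

lemma fps2_vanishes_below_3_diff_saddle_iff:
  "fps2_vanishes_below 3 (z - saddle a b) \<longleftrightarrow>
     z 2 0 = a / 2 \<and> z 0 2 = - b / 2 \<and>
     (\<forall>m n. m + n \<le> 2 \<longrightarrow> (m, n) \<noteq> (2, 0) \<longrightarrow> (m, n) \<noteq> (0, 2) \<longrightarrow> z m n = 0)"
    (is "_ \<longleftrightarrow> ?normalized")
proof
  assume "fps2_vanishes_below 3 (z - saddle a b)"
  then show ?normalized
    by (auto simp: fps2_vanishes_below_def saddle_def fps2_monom_def)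
next
  assume ?normalized
  then have "z i j = saddle a b i j" if "i + j < 3" for i j
    using that by (cases "(i, j) = (2, 0)"; cases "(i, j) = (0, 2)") (auto simp: saddle_def fps2_monom_def)
  then show "fps2_vanishes_below 3 (z - saddle a b)"
    by (simp add: fps2_vanishes_below_def)
qed

lemma saddle_solution_unique:
  assumes ab: "rat_lin_indep2 a b"
    and z: "fps2_vanishes_below 3 (z - saddle a b)" and w: "fps2_vanishes_below 3 (w - saddle a b)"
    and eq: "fps2_grad_dot z z = fps2_grad_dot w w"
  shows "z = w"
proof -
  have "z m n = w m n" if "m + n = d" for d m n
    using that
  proof (induction d arbitrary: m n rule: less_induct)
    case (less d)
    show ?case
    proof (cases "m + n < 3")
      case True
      then show ?thesis
        using z w by (auto simp: fps2_vanishes_below_def)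
    next
      case False
      then have "a * real m - b * real n \<noteq> 0"
        using rat_lin_indep2_nat_comb_eq_0[OF ab] by fastforce
      moreover have "fps2_grad_dot z z m n - fps2_grad_dot w w m n =
          2 * (a * real m - b * real n) * (z m n - w m n)"
        using z w less by (intro fps2_grad_dot_self_saddle_cong) auto
      ultimately show ?thesis
        using eq by simp
    qed
  qed
  then show ?thesis
    by (simp add: fun_eq_iff)
qed

text \<open>\<open>saddle_approx a b h d\<close> is the solution truncated to total degrees below \<open>max d 3\<close>.\<close>

primrec saddle_approx :: "real \<Rightarrow> real \<Rightarrow> fps2 \<Rightarrow> nat \<Rightarrow> fps2" where
  "saddle_approx a b h 0 = saddle a b"
| "saddle_approx a b h (Suc d) = (\<lambda>i j. if i + j = d \<and> 3 \<le> d
      then (h i j - fps2_grad_dot (saddle_approx a b h d) (saddle_approx a b h d) i j)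
             / (2 * (a * real i - b * real j))
      else saddle_approx a b h d i j)"

lemma saddle_approx_low: "i + j < 3 \<Longrightarrow> saddle_approx a b h d i j = saddle a b i j"
  by (induction d) auto

lemma saddle_approx_high: "3 \<le> i + j \<Longrightarrow> d \<le> i + j \<Longrightarrow> saddle_approx a b h d i j = 0"
  by (induction d) (auto simp: saddle_def fps2_monom_def)

lemma saddle_approx_stable: "i + j < d \<Longrightarrow> saddle_approx a b h (d + k) i j = saddle_approx a b h d i j"
  by (induction k) auto

lemma saddle_solution_exists:
  assumes ab: "rat_lin_indep2 a b"
    and h: "fps2_vanishes_below 3 (h - fps2_grad_dot (saddle a b) (saddle a b))"
  shows "\<exists>z. fps2_vanishes_below 3 (z - saddle a b) \<and> fps2_grad_dot z z = h"
proof (intro exI conjI)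
  define Z where "Z = saddle_approx a b h"
  define z where "z i j = Z (i + j + 1) i j" for i j
  have z_Z: "z i j = Z d i j" if "i + j < d" for i j d
    using saddle_approx_stable[of i j "i + j + 1" a b h "d - (i + j + 1)"] that by (simp add: z_def Z_def)
  have Z_low: "fps2_vanishes_below 3 (Z d - saddle a b)" for d
    by (simp add: fps2_vanishes_below_def Z_def saddle_approx_low)
  show z_low: "fps2_vanishes_below 3 (z - saddle a b)"
    using Z_low by (simp add: fps2_vanishes_below_def z_def)
  show "fps2_grad_dot z z = h"
  proof (intro ext)
    fix m n
    let ?c = "a * real m - b * real n"
    show "fps2_grad_dot z z m n = h m n"
    proof (cases "m + n < 3")
      case True
      have "fps2_grad_dot z z m n - fps2_grad_dot (saddle a b) (saddle a b) m n =
          2 * ?c * (z m n - saddle a b m n)"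
        using z_low True by (intro fps2_grad_dot_self_saddle_cong) (auto simp: fps2_vanishes_below_def)
      then show ?thesis
        using z_low h True by (simp add: fps2_vanishes_below_def)
    next
      case False
      have "fps2_grad_dot z z m n - fps2_grad_dot (Z (m + n)) (Z (m + n)) m n =
          2 * ?c * (z m n - Z (m + n) m n)"
        using z_low Z_low z_Z by (intro fps2_grad_dot_self_saddle_cong) auto
      moreover have "Z (m + n) m n = 0"
        using False by (simp add: Z_def saddle_approx_high)
      moreover have "z m n = (h m n - fps2_grad_dot (Z (m + n)) (Z (m + n)) m n) / (2 * ?c)"
        using False by (simp add: z_def Z_def)
      moreover have "?c \<noteq> 0"
        using rat_lin_indep2_nat_comb_eq_0[OF ab] False by fastforce
      ultimately show ?thesis
        by simp
    qed
  qed
qed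

theorem theorem4p2:
  fixes a b :: real and h :: fps2
  assumes "a > 0" and "b > 0" and "rat_lin_indep2 a b"
    and "h 2 0 = a ^ 2" and "h 0 2 = b ^ 2"
    and "\<And>m n. m + n \<le> 2 \<Longrightarrow> (m, n) \<noteq> (2, 0) \<Longrightarrow> (m, n) \<noteq> (0, 2) \<Longrightarrow> h m n = 0"
  shows "\<exists>!z :: fps2.
           z 2 0 = a / 2 \<and> z 0 2 = - b / 2 \<and>
           (\<forall>m n. m + n \<le> 2 \<longrightarrow> (m, n) \<noteq> (2, 0) \<longrightarrow> (m, n) \<noteq> (0, 2) \<longrightarrow> z m n = 0) \<and>
           fps2_add (fps2_mult (fps2_dx z) (fps2_dx z)) (fps2_mult (fps2_dy z) (fps2_dy z)) = h"
proof -
  have "fps2_vanishes_below 3 (h - fps2_grad_dot (saddle a b) (saddle a b))"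
    using assms(4-6) by (auto simp: fps2_vanishes_below_def fps2_grad_dot_saddle_saddle)
  then obtain z where "fps2_vanishes_below 3 (z - saddle a b)" "fps2_grad_dot z z = h"
    using saddle_solution_exists[OF assms(3)] by blast
  then have "\<exists>!z. fps2_vanishes_below 3 (z - saddle a b) \<and> fps2_grad_dot z z = h"
    using saddle_solution_unique[OF assms(3)] by blast
  then show ?thesis
    by (simp add: fps2_vanishes_below_3_diff_saddle_iff fps2_grad_dot_def conj_assoc)
qed

end
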